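(* For every monotone submodular function $f:2^{[3]}\to\mathbb{R}_+$ and every $\mathbf{x}\in[0,1]^3$, $f^{+}(\mathbf{x})/f^{++}(\mathbf{x})\le4/3$ (with the convention $0/0=1$).
   Context: $[n]=\{1,\dots,n\}$. A set function $f:2^{[n]}\to\mathbb{R}_+$ is monotone if $f(S)\le f(T)$ for $S\subseteq T$, submodular if $f(S)+f(T)\ge f(S\cap T)+f(S\cup T)$. For $\mathbf{x}\in[0,1]^n$: the concave closure $f^{+}(\mathbf{x})=\max\sum_{S\subseteq[n]}\theta(S)f(S)$ over $\theta:2^{[n]}\to\mathbb{R}_{\ge0}$ with $\sum_S\theta(S)=1$ and $\sum_{S\ni i}\theta(S)=x_i$ for all $i$; the upper pairwise independent extension $f^{++}(\mathbf{x})$ is the same maximum with the additional constraints $\sum_{S\ni i,j}\theta(S)=x_ix_j$ for all $i<j$. *)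

theory Defs
  imports Complex_Main
begin

definition monotone_setfun :: "nat set \<Rightarrow> (nat set \<Rightarrow> real) \<Rightarrow> bool" where
  "monotone_setfun N f \<longleftrightarrow> (\<forall>S T. S \<subseteq> T \<and> T \<subseteq> N \<longrightarrow> f S \<le> f T)"

definition submodular_setfun :: "nat set \<Rightarrow> (nat set \<Rightarrow> real) \<Rightarrow> bool" where
  "submodular_setfun N f \<longleftrightarrow>
     (\<forall>S T. S \<subseteq> N \<and> T \<subseteq> N \<longrightarrow> f S + f T \<ge> f (S \<inter> T) + f (S \<union> T))"

definition nonneg_setfun :: "nat set \<Rightarrow> (nat set \<Rightarrow> real) \<Rightarrow> bool" where
  "nonneg_setfun N f \<longleftrightarrow> (\<forall>S. S \<subseteq> N \<longrightarrow> f S \<ge> 0)"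

definition marginal_dists :: "nat set \<Rightarrow> (nat \<Rightarrow> real) \<Rightarrow> (nat set \<Rightarrow> real) set" where
  "marginal_dists N x = {\<theta>. (\<forall>S\<in>Pow N. \<theta> S \<ge> 0) \<and> (\<Sum>S\<in>Pow N. \<theta> S) = 1 \<and>
      (\<forall>i\<in>N. (\<Sum>S\<in>{S\<in>Pow N. i \<in> S}. \<theta> S) = x i)}"

definition pairwise_indep_dists :: "nat set \<Rightarrow> (nat \<Rightarrow> real) \<Rightarrow> (nat set \<Rightarrow> real) set" where
  "pairwise_indep_dists N x = {\<theta>\<in>marginal_dists N x.
      (\<forall>i\<in>N. \<forall>j\<in>N. i < j \<longrightarrow> (\<Sum>S\<in>{S\<in>Pow N. i \<in> S \<and> j \<in> S}. \<theta> S) = x i * x j)}"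

definition concave_closure :: "nat set \<Rightarrow> (nat set \<Rightarrow> real) \<Rightarrow> (nat \<Rightarrow> real) \<Rightarrow> real" where
  "concave_closure N f x = Sup ((\<lambda>\<theta>. \<Sum>S\<in>Pow N. \<theta> S * f S) ` marginal_dists N x)"

definition upper_pi_ext :: "nat set \<Rightarrow> (nat set \<Rightarrow> real) \<Rightarrow> (nat \<Rightarrow> real) \<Rightarrow> real" where
  "upper_pi_ext N f x = Sup ((\<lambda>\<theta>. \<Sum>S\<in>Pow N. \<theta> S * f S) ` pairwise_indep_dists N x)"

end

theory Submission
  imports Defs
begin

text \<open>
  Expand set functions on subsets of {1,2,3} in the functions min(k, |S \<inter> A|). A monotone
  submodular f is, up to the constant f {}, a nonnegative combination of the coverage functions
  [S \<inter> A \<noteq> {}] with |A| \<le> 2 and of one further function: the coverage function of {1,2,3}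
  if the third-order Moebius coefficient of f is nonnegative, and the truncated cardinality
  min(2, |S|) otherwise.

  Under every distribution with marginals x, min(k, |S \<inter> A|) has expectation at most
  min(k, \<Sum>i\<in>A. x i). The pairwise independent distributions with marginals x form a
  one-parameter family, parametrised by t = P(S = {1,2,3}). Choosing t maximal in the first case
  and minimal in the second, each basis function has expectation at least 3/4 of that bound under
  the pairwise independent distribution, and bounds of this kind survive nonnegative combinations.
\<close>

lemma four_mult_le_square_sum:
  fixes a b :: real
  shows "4 * (a * b) \<le> (a + b) * (a + b)"
proof -
  have "0 \<le> (a - b) * (a - b)" by simp
  then show ?thesis by (simp add: algebra_simps)
qed

lemma three_quarters_min_one_le:
  fixes u z :: real
  assumes "0 \<le> u" "0 \<le> z" "z \<le> 1"
  shows "3/4 * min 1 (u + z) \<le> u + z - u * z"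
proof (cases "u + z \<le> 1")
  case True
  have "(u + z) * (u + z) \<le> 1 * (u + z)"
    using True assms by (intro mult_right_mono) auto
  then show ?thesis
    using True four_mult_le_square_sum[of u z] by simp
next
  case False
  have "(1 - u) * (1 - z) \<le> 1/4"
  proof (cases "u \<le> 1")
    case True
    have "((1 - u) + (1 - z)) * ((1 - u) + (1 - z)) \<le> 1 * 1"
      using False True assms by (intro mult_mono) auto
    then show ?thesis
      using four_mult_le_square_sum[of "1 - u" "1 - z"] by simp
  next
    case False
    then have "(1 - u) * (1 - z) \<le> 0"
      using assms by (intro mult_nonpos_nonneg) auto
    then show ?thesis by simp
  qed
  then show ?thesis
    using False by (simp add: algebra_simps)
qed

lemma three_quarters_min_two_le:
  fixes u z :: real
  assumes "0 \<le> u" "0 \<le> z" "z \<le> 1"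
  shows "3/4 * min 2 (u + z) \<le> u + 2 * z - u * z"
proof -
  have square: "0 \<le> (z - 1/2) * (z - 1/2)" by simp
  have distrib: "u * (z - c) = u * z - u * c" for c
    by (simp add: algebra_simps)
  show ?thesis
  proof (cases "u + z \<le> 2")
    case True
    have "u * (z - 1/4) \<le> 5/4 * z"
    proof (cases "z \<le> 1/4")
      case True
      then have "u * (z - 1/4) \<le> 0"
        using assms by (intro mult_nonneg_nonpos) auto
      then show ?thesis
        using assms by simp
    next
      case False
      have "u * (z - 1/4) \<le> (2 - z) * (z - 1/4)"
        using False \<open>u + z \<le> 2\<close> by (intro mult_right_mono) auto
      also have "\<dots> = 5/4 * z - (z - 1/2) * (z - 1/2) - 1/4"
        by (simp add: field_simps)
      finally show ?thesis
        using square by linarith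
    qed
    then show ?thesis
      using True unfolding distrib by simp
  next
    case False
    have "(2 - z) * (1 - z) \<le> u * (1 - z)"
      using False assms by (intro mult_right_mono) auto
    also have "\<dots> = u - u * z"
      by (simp add: algebra_simps)
    finally show ?thesis
      using False square by (simp add: algebra_simps)
  qed
qed

section \<open>Expectations under distributions with given marginals\<close>

definition expectation :: "nat set \<Rightarrow> (nat set \<Rightarrow> real) \<Rightarrow> (nat set \<Rightarrow> real) \<Rightarrow> real" where
  "expectation N \<theta> g = (\<Sum>S\<in>Pow N. \<theta> S * g S)"

definition trunc_card :: "nat \<Rightarrow> nat set \<Rightarrow> nat set \<Rightarrow> real" where
  "trunc_card k A S = real (min k (card (S \<inter> A)))"

lemma marginal_dists_finite:
  assumes "\<theta> \<in> marginal_dists N x"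
  shows "finite N"
proof (rule ccontr)
  assume "infinite N"
  then have "(\<Sum>S\<in>Pow N. \<theta> S) = 0" by simp
  with assms show False unfolding marginal_dists_def by simp
qed

lemma expectation_add: "expectation N \<theta> (\<lambda>S. g S + h S) = expectation N \<theta> g + expectation N \<theta> h"
  unfolding expectation_def by (simp add: distrib_left sum.distrib)

lemma expectation_diff: "expectation N \<theta> (\<lambda>S. g S - h S) = expectation N \<theta> g - expectation N \<theta> h"
  unfolding expectation_def by (simp add: right_diff_distrib sum_subtractf)

lemma expectation_scale: "expectation N \<theta> (\<lambda>S. a * g S) = a * expectation N \<theta> g"
  unfolding expectation_def by (simp add: sum_distrib_left mult_ac)

lemma expectation_sum:
  "expectation N \<theta> (\<lambda>S. \<Sum>i\<in>I. g i S) = (\<Sum>i\<in>I. expectation N \<theta> (g i))"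
  unfolding expectation_def sum_distrib_left by (rule sum.swap)

lemma expectation_cong: "(\<And>S. S \<subseteq> N \<Longrightarrow> g S = h S) \<Longrightarrow> expectation N \<theta> g = expectation N \<theta> h"
  unfolding expectation_def by (intro sum.cong) auto

lemma expectation_mono:
  assumes "\<theta> \<in> marginal_dists N x" "\<And>S. S \<subseteq> N \<Longrightarrow> g S \<le> h S"
  shows "expectation N \<theta> g \<le> expectation N \<theta> h"
  using assms unfolding expectation_def marginal_dists_def
  by (intro sum_mono mult_left_mono) auto

lemma expectation_const:
  assumes "\<theta> \<in> marginal_dists N x"
  shows "expectation N \<theta> (\<lambda>_. c) = c"
  using assms unfolding expectation_def marginal_dists_def by (simp flip: sum_distrib_right)

lemma expectation_indicator:
  assumes "\<theta> \<in> marginal_dists N x" "i \<in> N"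
  shows "expectation N \<theta> (\<lambda>S. of_bool (i \<in> S)) = x i"
proof -
  have "finite N" using assms(1) by (rule marginal_dists_finite)
  then have "expectation N \<theta> (\<lambda>S. of_bool (i \<in> S)) = (\<Sum>S\<in>{S\<in>Pow N. i \<in> S}. \<theta> S)"
    unfolding expectation_def by (simp add: Int_def)
  also have "\<dots> = x i"
    using assms unfolding marginal_dists_def by simp
  finally show ?thesis .
qed

lemma expectation_pair_indicator:
  assumes "\<theta> \<in> pairwise_indep_dists N x" "i \<in> N" "j \<in> N" "i \<noteq> j"
  shows "expectation N \<theta> (\<lambda>S. of_bool (i \<in> S) * of_bool (j \<in> S)) = x i * x j"
proof -
  have "finite N"
    using assms(1) marginal_dists_finite unfolding pairwise_indep_dists_def by blast
  then have "expectation N \<theta> (\<lambda>S. of_bool (i \<in> S) * of_bool (j \<in> S))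
      = (\<Sum>S\<in>{S\<in>Pow N. i \<in> S \<and> j \<in> S}. \<theta> S)"
    unfolding expectation_def by (simp add: Int_def flip: of_bool_conj)
  also have "\<dots> = x i * x j"
    using assms unfolding pairwise_indep_dists_def
    by (cases i j rule: linorder_cases) (auto simp: conj_commute mult.commute)
  finally show ?thesis .
qed

lemma expectation_trunc_card_le:
  assumes "\<theta> \<in> marginal_dists N x" "A \<subseteq> N"
  shows "expectation N \<theta> (trunc_card k A) \<le> min k (\<Sum>i\<in>A. x i)"
proof -
  have "finite A"
    using assms marginal_dists_finite finite_subset by blast
  have "expectation N \<theta> (trunc_card k A) \<le> expectation N \<theta> (\<lambda>_. k)"
    using assms(1) by (rule expectation_mono) (simp add: trunc_card_def)
  moreover have "expectation N \<theta> (trunc_card k A) \<le> expectation N \<theta> (\<lambda>S. \<Sum>i\<in>A. of_bool (i \<in> S))"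
    using assms(1) by (rule expectation_mono) (simp add: trunc_card_def \<open>finite A\<close> Int_commute)
  ultimately show ?thesis
    using assms by (simp add: expectation_const expectation_sum expectation_indicator subsetD)
qed

section \<open>Ratio bounds certified by a single distribution\<close>

definition gap_bounded ::
    "real \<Rightarrow> nat set \<Rightarrow> (nat \<Rightarrow> real) \<Rightarrow> (nat set \<Rightarrow> real) \<Rightarrow> (nat set \<Rightarrow> real) \<Rightarrow> bool" where
  "gap_bounded \<rho> N x \<theta>' g \<longleftrightarrow>
     (\<forall>\<theta>\<in>marginal_dists N x. expectation N \<theta> g \<le> \<rho> * expectation N \<theta>' g)"

lemma gap_bounded_cong:
  assumes "\<And>S. S \<subseteq> N \<Longrightarrow> g S = h S" "gap_bounded \<rho> N x \<theta>' h"
  shows "gap_bounded \<rho> N x \<theta>' g"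
  using assms expectation_cong[of N g h] unfolding gap_bounded_def by metis

lemma gap_bounded_add:
  assumes "gap_bounded \<rho> N x \<theta>' g" "gap_bounded \<rho> N x \<theta>' h"
  shows "gap_bounded \<rho> N x \<theta>' (\<lambda>S. g S + h S)"
  using assms unfolding gap_bounded_def expectation_add by (simp add: distrib_left add_mono)

lemma gap_bounded_scale:
  assumes "0 \<le> a" "gap_bounded \<rho> N x \<theta>' g"
  shows "gap_bounded \<rho> N x \<theta>' (\<lambda>S. a * g S)"
  using assms unfolding gap_bounded_def expectation_scale
  by (metis mult.left_commute mult_left_mono)

lemma gap_bounded_const:
  assumes "\<theta>' \<in> marginal_dists N x" "1 \<le> \<rho>" "0 \<le> c"
  shows "gap_bounded \<rho> N x \<theta>' (\<lambda>_. c)"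
  using assms unfolding gap_bounded_def
  by (simp add: expectation_const mult_le_cancel_right1)

lemma gap_bounded_trunc_card:
  assumes "A \<subseteq> N" "min k (\<Sum>i\<in>A. x i) \<le> \<rho> * expectation N \<theta>' (trunc_card k A)"
  shows "gap_bounded \<rho> N x \<theta>' (trunc_card k A)"
  using assms expectation_trunc_card_le unfolding gap_bounded_def by (meson order_trans)

lemma gap_bounded_singleton:
  assumes "\<theta>' \<in> marginal_dists N x" "i \<in> N" "0 \<le> x i"
  shows "gap_bounded (4/3) N x \<theta>' (trunc_card 1 {i})"
proof -
  have "trunc_card 1 {i} = (\<lambda>S. of_bool (i \<in> S))"
    by (auto simp: trunc_card_def fun_eq_iff)
  then have "expectation N \<theta>' (trunc_card 1 {i}) = x i"
    using assms by (simp add: expectation_indicator)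
  then show ?thesis
    using assms by (intro gap_bounded_trunc_card) auto
qed

lemma gap_bounded_pair:
  assumes "\<theta>' \<in> pairwise_indep_dists N x" "i \<in> N" "j \<in> N" "i \<noteq> j"
    and "0 \<le> x i" "0 \<le> x j" "x j \<le> 1"
  shows "gap_bounded (4/3) N x \<theta>' (trunc_card 1 {i, j})"
proof -
  have marginal: "\<theta>' \<in> marginal_dists N x"
    using assms(1) unfolding pairwise_indep_dists_def by simp
  have "trunc_card 1 {i, j}
      = (\<lambda>S. of_bool (i \<in> S) + of_bool (j \<in> S) - of_bool (i \<in> S) * of_bool (j \<in> S))"
    using \<open>i \<noteq> j\<close> by (auto simp: fun_eq_iff trunc_card_def Int_insert_right)
  then have "expectation N \<theta>' (trunc_card 1 {i, j}) = x i + x j - x i * x j"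
    using assms marginal
    by (simp add: expectation_diff expectation_add expectation_indicator expectation_pair_indicator)
  then show ?thesis
    using assms three_quarters_min_one_le[of "x i" "x j"] by (intro gap_bounded_trunc_card) auto
qed

lemma concave_closure_le_of_gap_bounded:
  assumes "0 \<le> \<rho>" "\<theta>' \<in> pairwise_indep_dists N x" "gap_bounded \<rho> N x \<theta>' f"
  shows "concave_closure N f x \<le> \<rho> * upper_pi_ext N f x"
proof -
  have marginal: "\<theta>' \<in> marginal_dists N x"
    using assms(2) unfolding pairwise_indep_dists_def by simp
  have "concave_closure N f x \<le> \<rho> * expectation N \<theta>' f"
    unfolding concave_closure_def expectation_def[symmetric]
    using assms(3) marginal unfolding gap_bounded_def by (intro cSup_least) auto
  also have "expectation N \<theta>' f \<le> upper_pi_ext N f x"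
  proof -
    have "bdd_above ((\<lambda>\<theta>. expectation N \<theta> f) ` pairwise_indep_dists N x)"
      using assms(3) unfolding gap_bounded_def pairwise_indep_dists_def bdd_above_def by blast
    then show ?thesis
      unfolding upper_pi_ext_def expectation_def[symmetric] using assms(2)
      by (intro cSup_upper) auto
  qed
  then have "\<rho> * expectation N \<theta>' f \<le> \<rho> * upper_pi_ext N f x"
    using assms(1) by (rule mult_left_mono)
  finally show ?thesis .
qed

lemma atLeastAtMost_1_3: "{1..3::nat} = {1, 2, 3}"
  by auto

lemma Pow_1_3: "Pow {1..3::nat} = {{}, {1}, {2}, {3}, {1, 2}, {1, 3}, {2, 3}, {1, 2, 3}}"
  unfolding atLeastAtMost_1_3 Pow_insert by auto

lemma subset_1_3_cases:
  assumes "S \<subseteq> {1..3::nat}"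
  obtains "S = {}" | "S = {1}" | "S = {2}" | "S = {3}" | "S = {1, 2}" | "S = {1, 3}" | "S = {2, 3}"
    | "S = {1, 2, 3}"
proof -
  have "S \<in> Pow {1..3}"
    using assms by simp
  then show ?thesis
    unfolding Pow_1_3 insert_iff empty_iff using that by metis
qed

lemma sum_Pow_insert:
  assumes "finite A" "a \<notin> A"
  shows "(\<Sum>S\<in>Pow (insert a A). g S) = (\<Sum>S\<in>Pow A. g S) + (\<Sum>S\<in>Pow A. g (insert a S))"
proof -
  have "inj_on (insert a) (Pow A)"
    using assms(2) by (auto intro!: inj_onI simp: insert_ident)
  then show ?thesis
    unfolding Pow_insert using assms by (subst sum.union_disjoint) (auto simp: sum.reindex)
qed

lemma sum_Pow_1_3:
  "(\<Sum>S\<in>Pow {1..3::nat}. g S)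
     = g {} + g {1} + g {2} + g {3} + g {1, 2} + g {1, 3} + g {2, 3} + g {1, 2, 3}"
  unfolding atLeastAtMost_1_3 by (simp add: sum_Pow_insert insert_commute add_ac)

lemma sum_Pow_filter:
  "finite A \<Longrightarrow> (\<Sum>S\<in>{S\<in>Pow A. P S}. g S) = (\<Sum>S\<in>Pow A. if P S then g S else 0)"
  by (rule sum.inter_filter) simp

lemma marginal_dists_1_3_iff:
  "\<theta> \<in> marginal_dists {1..3} x \<longleftrightarrow>
     (\<forall>S\<in>Pow {1..3}. 0 \<le> \<theta> S) \<and>
     \<theta> {} + \<theta> {1} + \<theta> {2} + \<theta> {3} + \<theta> {1, 2} + \<theta> {1, 3} + \<theta> {2, 3} + \<theta> {1, 2, 3} = 1 \<and>
     \<theta> {1} + \<theta> {1, 2} + \<theta> {1, 3} + \<theta> {1, 2, 3} = x 1 \<and>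
     \<theta> {2} + \<theta> {1, 2} + \<theta> {2, 3} + \<theta> {1, 2, 3} = x 2 \<and>
     \<theta> {3} + \<theta> {1, 3} + \<theta> {2, 3} + \<theta> {1, 2, 3} = x 3"
  unfolding marginal_dists_def sum_Pow_filter[OF finite_atLeastAtMost] sum_Pow_1_3
  unfolding atLeastAtMost_1_3 by (simp add: add_ac)

lemma pairwise_indep_dists_1_3_iff:
  "\<theta> \<in> pairwise_indep_dists {1..3} x \<longleftrightarrow> \<theta> \<in> marginal_dists {1..3} x \<and>
     \<theta> {1, 2} + \<theta> {1, 2, 3} = x 1 * x 2 \<and>
     \<theta> {1, 3} + \<theta> {1, 2, 3} = x 1 * x 3 \<and>
     \<theta> {2, 3} + \<theta> {1, 2, 3} = x 2 * x 3"
  unfolding pairwise_indep_dists_def sum_Pow_filter[OF finite_atLeastAtMost] sum_Pow_1_3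
  unfolding atLeastAtMost_1_3 by (simp add: add_ac)

lemma expectation_cover_1_3:
  assumes "\<theta> \<in> pairwise_indep_dists {1..3} x"
  shows "expectation {1..3} \<theta> (trunc_card 1 {1, 2, 3})
    = x 1 + x 2 + x 3 - x 1 * x 2 - x 1 * x 3 - x 2 * x 3 + \<theta> {1, 2, 3}"
  using assms
  unfolding pairwise_indep_dists_1_3_iff marginal_dists_1_3_iff expectation_def sum_Pow_1_3
  by (simp add: trunc_card_def)

lemma expectation_trunc_two_1_3:
  assumes "\<theta> \<in> marginal_dists {1..3} x"
  shows "expectation {1..3} \<theta> (trunc_card 2 {1, 2, 3}) = x 1 + x 2 + x 3 - \<theta> {1, 2, 3}"
  using assms unfolding marginal_dists_1_3_iff expectation_def sum_Pow_1_3
  by (simp add: trunc_card_def)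

section \<open>Pairwise independent distributions on {1,2,3}\<close>

text \<open>
  The product distribution, moved by t - x 1 * x 2 * x 3 along the parity character
  (-1)^(3-|S|). The parity character has vanishing moments of order at most two, so marginals and
  pairwise moments are those of the product distribution, while the mass of {1,2,3} becomes t.
\<close>

definition pi_dist :: "(nat \<Rightarrow> real) \<Rightarrow> real \<Rightarrow> nat set \<Rightarrow> real" where
  "pi_dist x t S = (\<Prod>i\<in>{1..3}. if i \<in> S then x i else 1 - x i)
     + (-1) ^ card ({1..3} - S) * (t - x 1 * x 2 * x 3)"

lemma pi_dist_simps:
  "pi_dist x t {} = 1 - x 1 - x 2 - x 3 + x 1 * x 2 + x 1 * x 3 + x 2 * x 3 - t"
  "pi_dist x t {1} = x 1 - x 1 * x 2 - x 1 * x 3 + t"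
  "pi_dist x t {2} = x 2 - x 1 * x 2 - x 2 * x 3 + t"
  "pi_dist x t {3} = x 3 - x 1 * x 3 - x 2 * x 3 + t"
  "pi_dist x t {1, 2} = x 1 * x 2 - t"
  "pi_dist x t {1, 3} = x 1 * x 3 - t"
  "pi_dist x t {2, 3} = x 2 * x 3 - t"
  "pi_dist x t {1, 2, 3} = t"
  unfolding pi_dist_def atLeastAtMost_1_3 by (simp_all add: algebra_simps)

text \<open>The largest and the smallest t for which pi_dist x t is nonnegative.\<close>

definition pi_top :: "(nat \<Rightarrow> real) \<Rightarrow> real" where
  "pi_top x = Min {x 1 * x 2, x 1 * x 3, x 2 * x 3,
     1 - x 1 - x 2 - x 3 + x 1 * x 2 + x 1 * x 3 + x 2 * x 3}"

definition pi_bot :: "(nat \<Rightarrow> real) \<Rightarrow> real" where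
  "pi_bot x = Max {0, x 1 * x 2 + x 1 * x 3 - x 1, x 1 * x 2 + x 2 * x 3 - x 2,
     x 1 * x 3 + x 2 * x 3 - x 3}"

lemma pi_dist_pairwise_indep:
  assumes "pi_bot x \<le> t" "t \<le> pi_top x"
  shows "pi_dist x t \<in> pairwise_indep_dists {1..3} x"
proof -
  have "\<forall>S\<in>Pow {1..3}. 0 \<le> pi_dist x t S"
    using assms unfolding Pow_1_3 ball_simps pi_dist_simps pi_bot_def pi_top_def by simp
  then show ?thesis
    unfolding pairwise_indep_dists_1_3_iff marginal_dists_1_3_iff pi_dist_simps
    by (simp add: algebra_simps)
qed

lemma pi_bot_le_pi_top:
  assumes "\<forall>i\<in>{1..3}. 0 \<le> x i \<and> x i \<le> 1"
  shows "pi_bot x \<le> pi_top x"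
proof -
  have x: "0 \<le> x 1" "x 1 \<le> 1" "0 \<le> x 2" "x 2 \<le> 1" "0 \<le> x 3" "x 3 \<le> 1"
    using assms by auto
  have "pi_bot x \<le> x 1 * x 2 * x 3"
  proof -
    have "0 \<le> x 1 * (1 - x 2) * (1 - x 3)" "0 \<le> x 2 * (1 - x 1) * (1 - x 3)"
      "0 \<le> x 3 * (1 - x 1) * (1 - x 2)"
      using x by simp_all
    then show ?thesis
      using x unfolding pi_bot_def by (simp add: algebra_simps)
  qed
  also have "x 1 * x 2 * x 3 \<le> pi_top x"
  proof -
    have "x 1 * x 2 * x 3 \<le> x 1 * x 2" "x 1 * x 3 * x 2 \<le> x 1 * x 3" "x 2 * x 3 * x 1 \<le> x 2 * x 3"
      using x by (simp_all add: mult_left_le)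
    moreover have "0 \<le> (1 - x 1) * (1 - x 2) * (1 - x 3)"
      using x by simp
    ultimately show ?thesis
      unfolding pi_top_def by (simp add: algebra_simps)
  qed
  finally show ?thesis .
qed

lemma gap_bounded_cover_pi_top:
  assumes "\<forall>i\<in>{1..3}. 0 \<le> x i \<and> x i \<le> 1"
  shows "gap_bounded (4/3) {1..3} x (pi_dist x (pi_top x)) (trunc_card 1 {1, 2, 3})"
proof -
  have x: "0 \<le> x 1" "x 1 \<le> 1" "0 \<le> x 2" "x 2 \<le> 1" "0 \<le> x 3" "x 3 \<le> 1"
    using assms by auto
  define s where "s = x 1 + x 2 + x 3"
  define q where "q = x 1 * x 2 + x 1 * x 3 + x 2 * x 3"
  have bound: "3/4 * min 1 s \<le> s - q + u"
    if "u \<in> {x 1 * x 2, x 1 * x 3, x 2 * x 3,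
      1 - x 1 - x 2 - x 3 + x 1 * x 2 + x 1 * x 3 + x 2 * x 3}" for u
    using that x three_quarters_min_one_le[of "x 1 + x 2" "x 3"]
      three_quarters_min_one_le[of "x 1 + x 3" "x 2"] three_quarters_min_one_le[of "x 2 + x 3" "x 1"]
    unfolding s_def q_def by (auto simp: algebra_simps min_def)
  have "3/4 * min 1 s \<le> s - q + pi_top x"
    unfolding pi_top_def by (rule bound, intro Min_in) auto
  moreover have
    "expectation {1..3} (pi_dist x (pi_top x)) (trunc_card 1 {1, 2, 3}) = s - q + pi_top x"
    using expectation_cover_1_3[OF pi_dist_pairwise_indep[OF pi_bot_le_pi_top[OF assms] order_refl]]
    unfolding s_def q_def pi_dist_simps by simp
  moreover have "(\<Sum>i\<in>{1, 2, 3}. x i) = s"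
    unfolding s_def by (simp add: add.assoc)
  ultimately show ?thesis
    by (intro gap_bounded_trunc_card) (auto simp: atLeastAtMost_1_3)
qed

lemma gap_bounded_trunc_two_pi_bot:
  assumes "\<forall>i\<in>{1..3}. 0 \<le> x i \<and> x i \<le> 1"
  shows "gap_bounded (4/3) {1..3} x (pi_dist x (pi_bot x)) (trunc_card 2 {1, 2, 3})"
proof -
  have x: "0 \<le> x 1" "x 1 \<le> 1" "0 \<le> x 2" "x 2 \<le> 1" "0 \<le> x 3" "x 3 \<le> 1"
    using assms by auto
  define s where "s = x 1 + x 2 + x 3"
  have bound: "3/4 * min 2 s \<le> s - u"
    if "u \<in> {0, x 1 * x 2 + x 1 * x 3 - x 1, x 1 * x 2 + x 2 * x 3 - x 2,
      x 1 * x 3 + x 2 * x 3 - x 3}" for u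
    using that x three_quarters_min_two_le[of "x 2 + x 3" "x 1"]
      three_quarters_min_two_le[of "x 1 + x 3" "x 2"] three_quarters_min_two_le[of "x 1 + x 2" "x 3"]
    unfolding s_def by (auto simp: algebra_simps min_def)
  have gap: "3/4 * min 2 s \<le> s - pi_bot x"
    unfolding pi_bot_def by (rule bound, intro Max_in) auto
  have "pi_dist x (pi_bot x) \<in> marginal_dists {1..3} x"
    using pi_dist_pairwise_indep[OF order_refl pi_bot_le_pi_top[OF assms]]
    unfolding pairwise_indep_dists_def by simp
  from expectation_trunc_two_1_3[OF this]
  have "expectation {1..3} (pi_dist x (pi_bot x)) (trunc_card 2 {1, 2, 3}) = s - pi_bot x"
    unfolding pi_dist_simps s_def .
  moreover have "(\<Sum>i\<in>{1, 2, 3}. x i) = s"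
    unfolding s_def by (simp add: add.assoc)
  ultimately show ?thesis
    using gap by (intro gap_bounded_trunc_card) (auto simp: atLeastAtMost_1_3)
qed

section \<open>Monotone submodular functions on {1,2,3}\<close>

lemma monotone_setfunD: "monotone_setfun N f \<Longrightarrow> S \<subseteq> T \<Longrightarrow> T \<subseteq> N \<Longrightarrow> f S \<le> f T"
  unfolding monotone_setfun_def by blast

lemma submodular_setfunD:
  assumes "submodular_setfun N f" "S \<subseteq> N" "T \<subseteq> N" "S \<inter> T = I" "S \<union> T = U"
  shows "f I + f U \<le> f S + f T"
  using assms unfolding submodular_setfun_def by blast

definition mobius_123 :: "(nat set \<Rightarrow> real) \<Rightarrow> real" where
  "mobius_123 f = f {1, 2, 3} - f {1, 2} - f {1, 3} - f {2, 3} + f {1} + f {2} + f {3} - f {}"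

lemma cover_decomposition_1_3:
  assumes "S \<subseteq> {1..3}"
  shows "f S = f {}
    + (f {1, 2, 3} - f {2, 3}) * trunc_card 1 {1} S
    + (f {1, 2, 3} - f {1, 3}) * trunc_card 1 {2} S
    + (f {1, 2, 3} - f {1, 2}) * trunc_card 1 {3} S
    + (f {1, 3} + f {2, 3} - f {3} - f {1, 2, 3}) * trunc_card 1 {1, 2} S
    + (f {1, 2} + f {2, 3} - f {2} - f {1, 2, 3}) * trunc_card 1 {1, 3} S
    + (f {1, 2} + f {1, 3} - f {1} - f {1, 2, 3}) * trunc_card 1 {2, 3} S
    + mobius_123 f * trunc_card 1 {1, 2, 3} S"
  using assms by (cases rule: subset_1_3_cases) (simp_all add: trunc_card_def mobius_123_def)

lemma truncation_decomposition_1_3: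
  assumes "S \<subseteq> {1..3}"
  shows "f S = f {}
    + (f {1, 2, 3} - f {2, 3}) * trunc_card 1 {1} S
    + (f {1, 2, 3} - f {1, 3}) * trunc_card 1 {2} S
    + (f {1, 2, 3} - f {1, 2}) * trunc_card 1 {3} S
    + (f {1} + f {2} - f {1, 2} - f {}) * trunc_card 1 {1, 2} S
    + (f {1} + f {3} - f {1, 3} - f {}) * trunc_card 1 {1, 3} S
    + (f {2} + f {3} - f {2, 3} - f {}) * trunc_card 1 {2, 3} S
    + (- mobius_123 f) * trunc_card 2 {1, 2, 3} S"
  using assms by (cases rule: subset_1_3_cases) (simp_all add: trunc_card_def mobius_123_def)

lemma gap_bounded_small_covers:
  assumes "\<forall>i\<in>{1..3}. 0 \<le> x i \<and> x i \<le> 1" "\<theta>' \<in> pairwise_indep_dists {1..3} x"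
  shows "gap_bounded (4/3) {1..3} x \<theta>' (trunc_card 1 {1})"
    "gap_bounded (4/3) {1..3} x \<theta>' (trunc_card 1 {2})"
    "gap_bounded (4/3) {1..3} x \<theta>' (trunc_card 1 {3})"
    "gap_bounded (4/3) {1..3} x \<theta>' (trunc_card 1 {1, 2})"
    "gap_bounded (4/3) {1..3} x \<theta>' (trunc_card 1 {1, 3})"
    "gap_bounded (4/3) {1..3} x \<theta>' (trunc_card 1 {2, 3})"
proof -
  have "\<theta>' \<in> marginal_dists {1..3} x"
    using assms(2) unfolding pairwise_indep_dists_def by simp
  then have singleton: "gap_bounded (4/3) {1..3} x \<theta>' (trunc_card 1 {i})" if "i \<in> {1..3}" for i
    using assms that by (intro gap_bounded_singleton) auto
  have pair: "gap_bounded (4/3) {1..3} x \<theta>' (trunc_card 1 {i, j})"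
    if "i \<in> {1..3}" "j \<in> {1..3}" "i \<noteq> j" for i j
    using assms that by (intro gap_bounded_pair) auto
  show "gap_bounded (4/3) {1..3} x \<theta>' (trunc_card 1 {1})"
    "gap_bounded (4/3) {1..3} x \<theta>' (trunc_card 1 {2})"
    "gap_bounded (4/3) {1..3} x \<theta>' (trunc_card 1 {3})"
    "gap_bounded (4/3) {1..3} x \<theta>' (trunc_card 1 {1, 2})"
    "gap_bounded (4/3) {1..3} x \<theta>' (trunc_card 1 {1, 3})"
    "gap_bounded (4/3) {1..3} x \<theta>' (trunc_card 1 {2, 3})"
    using singleton[of 1] singleton[of 2] singleton[of 3] pair[of 1 2] pair[of 1 3] pair[of 2 3]
    by simp_all
qed

lemma gap_bounded_nonneg_mobius:
  assumes "nonneg_setfun {1..3} f" "monotone_setfun {1..3} f" "submodular_setfun {1..3} f"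
    and "\<forall>i\<in>{1..3}. 0 \<le> x i \<and> x i \<le> 1" "\<theta>' \<in> pairwise_indep_dists {1..3} x"
    and "0 \<le> mobius_123 f" "gap_bounded (4/3) {1..3} x \<theta>' (trunc_card 1 {1, 2, 3})"
  shows "gap_bounded (4/3) {1..3} x \<theta>' f"
proof -
  have "0 \<le> f {}"
    using assms(1) unfolding nonneg_setfun_def by simp
  moreover have "f {2, 3} \<le> f {1, 2, 3}" "f {1, 3} \<le> f {1, 2, 3}" "f {1, 2} \<le> f {1, 2, 3}"
    by (rule monotone_setfunD[OF assms(2)]; auto)+
  moreover have "f {3} + f {1, 2, 3} \<le> f {1, 3} + f {2, 3}"
    "f {2} + f {1, 2, 3} \<le> f {1, 2} + f {2, 3}"
    "f {1} + f {1, 2, 3} \<le> f {1, 2} + f {1, 3}"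
    by (rule submodular_setfunD[OF assms(3)]; auto)+
  moreover have "\<theta>' \<in> marginal_dists {1..3} x"
    using assms(5) unfolding pairwise_indep_dists_def by simp
  ultimately show ?thesis
    by - (rule gap_bounded_cong, erule cover_decomposition_1_3,
        intro gap_bounded_add gap_bounded_scale gap_bounded_const
          gap_bounded_small_covers[OF assms(4,5)] assms(6,7), auto)
qed

lemma gap_bounded_nonpos_mobius:
  assumes "nonneg_setfun {1..3} f" "monotone_setfun {1..3} f" "submodular_setfun {1..3} f"
    and "\<forall>i\<in>{1..3}. 0 \<le> x i \<and> x i \<le> 1" "\<theta>' \<in> pairwise_indep_dists {1..3} x"
    and "mobius_123 f \<le> 0" "gap_bounded (4/3) {1..3} x \<theta>' (trunc_card 2 {1, 2, 3})"
  shows "gap_bounded (4/3) {1..3} x \<theta>' f"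
proof -
  have "0 \<le> f {}"
    using assms(1) unfolding nonneg_setfun_def by simp
  moreover have "f {2, 3} \<le> f {1, 2, 3}" "f {1, 3} \<le> f {1, 2, 3}" "f {1, 2} \<le> f {1, 2, 3}"
    by (rule monotone_setfunD[OF assms(2)]; auto)+
  moreover have "f {} + f {1, 2} \<le> f {1} + f {2}" "f {} + f {1, 3} \<le> f {1} + f {3}"
    "f {} + f {2, 3} \<le> f {2} + f {3}"
    by (rule submodular_setfunD[OF assms(3)]; auto)+
  moreover have "\<theta>' \<in> marginal_dists {1..3} x"
    using assms(5) unfolding pairwise_indep_dists_def by simp
  ultimately show ?thesis
    by - (rule gap_bounded_cong, erule truncation_decomposition_1_3,
        intro gap_bounded_add gap_bounded_scale gap_bounded_const
          gap_bounded_small_covers[OF assms(4,5)] assms(7), auto simp: assms(6))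
qed

theorem mainTheorem9:
  fixes f :: "nat set \<Rightarrow> real" and x :: "nat \<Rightarrow> real"
  assumes "nonneg_setfun {1..3} f"
    and "monotone_setfun {1..3} f"
    and "submodular_setfun {1..3} f"
    and "\<forall>i\<in>{1..3}. 0 \<le> x i \<and> x i \<le> 1"
  shows "concave_closure {1..3} f x \<le> 4/3 * upper_pi_ext {1..3} f x"
proof -
  have range: "pi_bot x \<le> pi_top x"
    using assms(4) by (rule pi_bot_le_pi_top)
  obtain t where "pi_dist x t \<in> pairwise_indep_dists {1..3} x"
    and "gap_bounded (4/3) {1..3} x (pi_dist x t) f"
  proof (cases "0 \<le> mobius_123 f")
    case True
    have "pi_dist x (pi_top x) \<in> pairwise_indep_dists {1..3} x"
      using range by (rule pi_dist_pairwise_indep) simp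
    with True show ?thesis
      using assms gap_bounded_cover_pi_top[OF assms(4)]
      by (blast intro: that gap_bounded_nonneg_mobius)
  next
    case False
    then have "mobius_123 f \<le> 0" by simp
    moreover have "pi_dist x (pi_bot x) \<in> pairwise_indep_dists {1..3} x"
      using range by (intro pi_dist_pairwise_indep) simp_all
    ultimately show ?thesis
      using assms gap_bounded_trunc_two_pi_bot[OF assms(4)]
      by (blast intro: that gap_bounded_nonpos_mobius)
  qed
  then show ?thesis
    by (intro concave_closure_le_of_gap_bounded) auto
qed

end
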